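(* Let $r:\Sigma\to(0,\infty)$ be continuous and let $M,M'$ be one-step locally constant cocycles on $\Sigma=\{1,2,3\}^{\mathbb Z}$ such that $\lambda(\overline 1)\neq0$. Then for every $i\in\{1,2,3\}$ and every $\varepsilon>0$ there exists a periodic orbit of $(\Sigma_r,\sigma_r)$ whose Lyapunov exponents $\lambda,\lambda'$ for the suspended cocycles $\mathcal A,\mathcal A'$ satisfy $|\lambda-\lambda(\overline i)|<\varepsilon$, $|\lambda'-\lambda'(\overline i)|<\varepsilon$ and $\lambda\neq0$.
   Context: $\Sigma=\{1,2,3\}^{\mathbb Z}$ with the shift $\sigma$; for a finite word $w$, $\overline w$ is the periodic sequence repeating $w$. For continuous $r:\Sigma\to(0,\infty)$, the suspension $\Sigma_r$ is the quotient of $\Sigma\times\mathbb R$ by $(\underline\varepsilon,s)\sim(\sigma\underline\varepsilon,s-r(\underline\varepsilon))$, with flow $\sigma_r^t(\underline\varepsilon,s)=(\underline\varepsilon,s+t)$. A one-step locally constant cocycle $M$ is given by nine matrices $M_{i,j}\in\mathrm{SL}(2,\mathbb R)$, $i,j\in\{1,2,3\}$, via $M^1(\underline\varepsilon)=M_{\varepsilon_0,\varepsilon_1}$ and $M^n(\underline\varepsilon)=M_{\varepsilon_{n-1},\varepsilon_n}\cdots M_{\varepsilon_0,\varepsilon_1}$. Its suspension $\mathcal A$ is the cocycle over $\sigma_r^t$ on the bundle obtained as the quotient of $\Sigma\times\mathbb R\times\mathbb R^2$ by $(\underline\varepsilon,s,v)\sim(\sigma\underline\varepsilon,s-r(\underline\varepsilon),M_{\varepsilon_0,\varepsilon_1}v)$,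 induced by $(\underline\varepsilon,s,v)\mapsto(\underline\varepsilon,s+t,v)$; $\mathcal A'$ is defined from $M'$ in the same way. The Lyapunov exponent for $\mathcal A$ of the periodic orbit of $\sigma_r$ through $(\underline\varepsilon,0)$, where $\underline\varepsilon=\overline{\varepsilon_0\cdots\varepsilon_{n-1}}$, is $\log\mathrm{sr}(M^n(\underline\varepsilon))/\sum_{k=0}^{n-1}r(\sigma^k\underline\varepsilon)$, $\mathrm{sr}$ denoting the spectral radius. In particular $\lambda(\overline i)=\log\mathrm{sr}(M_{i,i})/r(\overline i)$, and $\lambda'(\overline i)$ is defined likewise with $M'$. *)

theory Defs
  imports "HOL-Analysis.Analysis"
begin

text \<open>Symbols 1,2,3; sequences are int-indexed nat-valued, product topology
  (Function_Topology), nat carries its discrete topology.\<close>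
definition Sigma3 :: "(int \<Rightarrow> nat) set" where
  "Sigma3 = {x. \<forall>n. x n \<in> {1,2,3}}"

definition shift :: "(int \<Rightarrow> nat) \<Rightarrow> (int \<Rightarrow> nat)" where
  "shift x = (\<lambda>n. x (n + 1))"

definition per :: "nat list \<Rightarrow> (int \<Rightarrow> nat)" where
  "per w = (\<lambda>n. w ! nat (n mod int (length w)))"

fun cpow :: "(nat \<Rightarrow> nat \<Rightarrow> real^2^2) \<Rightarrow> (int \<Rightarrow> nat) \<Rightarrow> nat \<Rightarrow> real^2^2" where
  "cpow M x 0 = mat 1"
| "cpow M x (Suc n) = M (x (int n)) (x (int n + 1)) ** cpow M x n"

definition cmat :: "real^2^2 \<Rightarrow> complex^2^2" where
  "cmat A = (\<chi> i j. complex_of_real (A $ i $ j))"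

definition eigenvalues2 :: "real^2^2 \<Rightarrow> complex set" where
  "eigenvalues2 A = {\<mu>. \<exists>v::complex^2. v \<noteq> 0 \<and> cmat A *v v = \<mu> *s v}"

definition sr :: "real^2^2 \<Rightarrow> real" where
  "sr A = Max (cmod ` eigenvalues2 A)"

text \<open>Lyapunov exponent of the periodic orbit of the suspension flow through (per w, 0)\<close>
definition lyap :: "((int \<Rightarrow> nat) \<Rightarrow> real) \<Rightarrow> (nat \<Rightarrow> nat \<Rightarrow> real^2^2) \<Rightarrow> nat list \<Rightarrow> real" where
  "lyap r M w = ln (sr (cpow M (per w) (length w)))
     / (\<Sum>k<length w. r ((shift ^^ k) (per w)))"

end

theory Submission
  imports Defs
begin

(*
  If lyap r M [i] <> 0 the fixed point of i itself is the required orbit.  Otherwise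
  |tr M_ii| <= 2, while M_11 is hyperbolic because lyap r M [1] <> 0.  The periodic
  word i^(n+1) u has cocycle matrix G B^n, where B = M_ii and G is the product of M
  along the excursion i u i.  Its period grows like n times the value of r at the
  constant sequence i, and ln sr (G B^n) grows like n ln sr B as soon as the traces
  tr (G B^k) have a nonzero component along the expanding eigenvalue of B (automatic
  when |tr B| <= 2).  Hence for both cocycles the exponents of these orbits tend to
  those of the fixed point.

  The traces t_k = tr (G B^k) satisfy t_(k+2) = tr B * t_(k+1) - t_k, which preserves
  the quadratic form x^2 - tr B * x y + y^2.  If G is a large multiple of a rank-one
  matrix plus a bounded error, this invariant is large, so |t_k| > 2 infinitely often,
  and then sr (G B^k) > 1 makes the exponent for M nonzero.  Excursions through a long
  block of 1's give such G, since M_11^m is rho^m times a rank-one projection up to a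
  bounded error.  Doubling an excursion squares its M'-matrix, and for one of the
  two words the traces for M' grow at the full rate.
*)

section \<open>Two-by-two matrices\<close>

lemma matrix_add_rdistrib: "((A::'a::semiring_1^'n^'m) + B) ** C = A ** C + B ** C"
  by (vector matrix_matrix_mult_def sum.distrib[symmetric] field_simps)

lemma matrix_diff_ldistrib: "(A::'a::ring_1^'n^'m) ** (B - C) = A ** B - A ** C"
  by (vector matrix_matrix_mult_def sum_subtractf[symmetric] field_simps)

lemma matrix_diff_rdistrib: "((A::'a::ring_1^'n^'m) - B) ** C = A ** C - B ** C"
  by (vector matrix_matrix_mult_def sum_subtractf[symmetric] field_simps)

lemma matrix_scaleR_right: "(A::real^'n^'m) ** (c *\<^sub>R B) = c *\<^sub>R (A ** B)"
  by (simp add: matrix_scalar_ac scalar_matrix_assoc)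

lemma trace_scaleR: "trace (c *\<^sub>R (A::real^'n^'n)) = c * trace A"
  by (simp add: trace_def sum_distrib_left)

lemma trace_2: "trace (A::'a::semiring_1^2^2) = A$1$1 + A$2$2"
  by (simp add: trace_def sum_2)

lemmas matrix_linear_simps = matrix_add_ldistrib matrix_add_rdistrib matrix_diff_ldistrib
  matrix_diff_rdistrib scalar_matrix_assoc[symmetric] matrix_scaleR_right
  trace_add trace_sub trace_scaleR

lemma abs_trace_add_scaleR_le:
  fixes Y Z :: "real^'n^'n"
  assumes "\<bar>c\<bar> \<le> 1"
  shows "\<bar>trace (Y + c *\<^sub>R Z)\<bar> \<le> \<bar>trace Y\<bar> + \<bar>trace Z\<bar>"
proof -
  have "\<bar>c * trace Z\<bar> \<le> \<bar>trace Z\<bar>"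
    using assms by (simp add: abs_mult mult_left_le_one_le)
  then show ?thesis
    using abs_triangle_ineq[of "trace Y" "c * trace Z"] by (simp add: trace_add trace_scaleR)
qed

lemma cayley_hamilton_2x2: "(A::real^2^2) ** A = trace A *\<^sub>R A - det A *\<^sub>R mat 1"
  by (simp add: vec_eq_iff forall_2 matrix_matrix_mult_def sum_2 trace_2 det_2 mat_def algebra_simps)

fun matpow :: "real^'n^'n \<Rightarrow> nat \<Rightarrow> real^'n^'n" where
  "matpow A 0 = mat 1"
| "matpow A (Suc n) = matpow A n ** A"

lemma det_matpow: "det (matpow A n) = det A ^ n"
  by (induction n) (auto simp: det_mul)

lemma matpow_Suc_Suc_SL2:
  assumes "det (A::real^2^2) = 1"
  shows "matpow A (Suc (Suc k)) = trace A *\<^sub>R matpow A (Suc k) - matpow A k"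
proof -
  have "matpow A (Suc (Suc k)) = matpow A k ** (A ** A)" by (simp add: matrix_mul_assoc)
  then show ?thesis
    using assms by (simp add: cayley_hamilton_2x2 matrix_linear_simps matrix_mul_assoc)
qed

lemma matpow_spectral_decomposition:
  fixes A :: "real^2^2"
  assumes "det A = 1" "\<rho> + \<mu> = trace A" "\<rho> * \<mu> = 1" "\<rho> \<noteq> \<mu>"
  defines "P \<equiv> (1 / (\<rho> - \<mu>)) *\<^sub>R (A - \<mu> *\<^sub>R mat 1)"
    and "Q \<equiv> (1 / (\<rho> - \<mu>)) *\<^sub>R (\<rho> *\<^sub>R mat 1 - A)"
  shows "matpow A k = \<rho> ^ k *\<^sub>R P + \<mu> ^ k *\<^sub>R Q" "det P = 0" "trace P = 1"
proof -
  have AA: "A ** A = (\<rho> + \<mu>) *\<^sub>R A - mat 1"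
    using cayley_hamilton_2x2[of A] assms(1,2) by simp
  have "P ** A = \<rho> *\<^sub>R P" "Q ** A = \<mu> *\<^sub>R Q"
    using assms(3) by (simp_all add: P_def Q_def matrix_linear_simps AA algebra_simps)
  then show "matpow A k = \<rho> ^ k *\<^sub>R P + \<mu> ^ k *\<^sub>R Q"
  proof (induction k)
    case 0
    have "P + Q = (1 / (\<rho> - \<mu>)) *\<^sub>R ((\<rho> - \<mu>) *\<^sub>R mat 1)"
      by (simp add: P_def Q_def algebra_simps)
    then show ?case
      using assms(4) by simp
  qed (simp add: matrix_linear_simps mult.commute)
  have det_scaleR: "det (c *\<^sub>R X) = c\<^sup>2 * det X" for c and X :: "real^2^2"
    by (simp add: det_2 power2_eq_square algebra_simps)
  have "det (A - \<mu> *\<^sub>R mat 1) = \<mu>\<^sup>2 - trace A * \<mu> + det A"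
    by (simp add: det_2 trace_2 mat_def power2_eq_square algebra_simps)
  then have "det (A - \<mu> *\<^sub>R mat 1) = 0"
    using assms(1,3) by (simp add: power2_eq_square algebra_simps flip: assms(2))
  then show "det P = 0"
    unfolding P_def by (simp only: det_scaleR mult_zero_right)
  show "trace P = 1"
    using assms(2,4) by (simp add: P_def matrix_linear_simps trace_I flip: assms(2))
qed

section \<open>Spectral radius in SL(2)\<close>

lemma mult_eq_1_imp_abs_less_1:
  fixes \<rho> \<mu> :: real
  assumes "\<rho> * \<mu> = 1" "1 < \<bar>\<rho>\<bar>"
  shows "\<bar>\<mu>\<bar> < 1"
proof -
  have "\<bar>\<mu>\<bar> = 1 / \<bar>\<rho>\<bar>"
    using assms by (simp add: field_simps flip: abs_mult)
  then show ?thesis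
    using assms(2) by simp
qed

lemma SL2_hyperbolic_roots:
  fixes t :: real
  assumes "2 < \<bar>t\<bar>"
  obtains \<rho> \<mu> where "\<rho> + \<mu> = t" "\<rho> * \<mu> = 1" "1 < \<bar>\<rho>\<bar>"
proof
  define s where "s = sqrt (t\<^sup>2 - 4)"
  have "2\<^sup>2 < \<bar>t\<bar>\<^sup>2"
    using assms by (intro power_strict_mono) auto
  then have s2: "s\<^sup>2 = t\<^sup>2 - 4" and s0: "0 \<le> s"
    by (simp_all add: s_def)
  have sgn: "sgn t * \<bar>t\<bar> = t" "sgn t * sgn t = 1"
    using assms by (auto simp: sgn_if)
  show "sgn t * ((\<bar>t\<bar> + s) / 2) + sgn t * ((\<bar>t\<bar> - s) / 2) = t"
    using sgn by (simp add: field_simps)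
  show "sgn t * ((\<bar>t\<bar> + s) / 2) * (sgn t * ((\<bar>t\<bar> - s) / 2)) = 1"
    using sgn s2 by (simp add: power2_eq_square field_simps abs_mult_self_eq mult.assoc)
  show "1 < \<bar>sgn t * ((\<bar>t\<bar> + s) / 2)\<bar>"
    using assms s0 by (simp add: abs_mult abs_sgn_eq)
qed

lemma det_zero_iff_kernel:
  "det (B::'a::field^'n^'n) = 0 \<longleftrightarrow> (\<exists>v. v \<noteq> 0 \<and> B *v v = 0)"
proof -
  have "det (matrix ((*v) B)) \<noteq> 0 \<longleftrightarrow> inj ((*v) B)"
    by (rule det_nz_iff_inj_gen) (simp add: matrix_vector_mul_linear_gen)
  then show ?thesis
    by (auto simp: vec.inj_iff_eq_0)
qed

lemma eigenvalues2_char_poly: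
  "eigenvalues2 A = {\<mu>. \<mu>\<^sup>2 - of_real (trace A) * \<mu> + of_real (det A) = 0}"
proof -
  have "cmat A *v v = \<mu> *s v \<longleftrightarrow> (cmat A - mat \<mu>) *v v = 0" for \<mu> v
  proof -
    have "mat \<mu> *v v = \<mu> *s v"
      by (simp add: vec_eq_iff matrix_vector_mult_def mat_def sum_2 forall_2)
    then show ?thesis by (simp add: matrix_vector_mult_diff_rdistrib)
  qed
  moreover have "det (cmat A - mat \<mu>) = \<mu>\<^sup>2 - of_real (trace A) * \<mu> + of_real (det A)" for \<mu>
    by (simp add: det_2 trace_2 cmat_def mat_def power2_eq_square algebra_simps)
  ultimately show ?thesis
    unfolding eigenvalues2_def using det_zero_iff_kernel[of "cmat A - mat _"] by auto
qed

lemma sr_SL2_eq_max_roots: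
  assumes "det A = 1" "z1 + z2 = of_real (trace A)" "z1 * z2 = 1"
  shows "sr A = max (cmod z1) (cmod z2)"
proof -
  have "\<mu>\<^sup>2 - of_real (trace A) * \<mu> + of_real (det A) = (\<mu> - z1) * (\<mu> - z2)" for \<mu>
    using assms(1,3) by (simp add: power2_eq_square algebra_simps flip: assms(2))
  then have "eigenvalues2 A = {z1, z2}"
    by (auto simp: eigenvalues2_char_poly)
  then show ?thesis
    by (simp add: sr_def)
qed

lemma sr_SL2_elliptic:
  assumes "det A = 1" "\<bar>trace A\<bar> \<le> 2"
  shows "sr A = 1"
proof -
  define t where "t = trace A"
  define z where "z = Complex (t/2) (sqrt (4 - t\<^sup>2) / 2)"
  have t2: "t\<^sup>2 \<le> 4"
    using assms(2) abs_le_square_iff[of t 2] by (simp add: t_def)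
  have "z * cnj z = 1"
    using t2 by (simp add: z_def complex_eq_iff power2_eq_square field_simps)
  moreover have "z + cnj z = of_real t"
    by (simp add: z_def complex_eq_iff)
  moreover have "cmod z = 1"
    using t2 by (simp add: z_def cmod_def power_divide add_divide_distrib[symmetric])
  ultimately show ?thesis
    using sr_SL2_eq_max_roots[OF assms(1)] by (simp add: t_def)
qed

lemma sr_SL2_hyperbolic:
  assumes "det A = 1" "\<rho> + \<mu> = trace A" "\<rho> * \<mu> = 1" "1 < \<bar>\<rho>\<bar>"
  shows "sr A = \<bar>\<rho>\<bar>"
proof -
  have "sr A = max \<bar>\<rho>\<bar> \<bar>\<mu>\<bar>"
    using sr_SL2_eq_max_roots[OF assms(1), of "of_real \<rho>" "of_real \<mu>"] assms(2,3)
    by (simp flip: of_real_add of_real_mult)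
  then show ?thesis
    using mult_eq_1_imp_abs_less_1[OF assms(3,4)] assms(4) by simp
qed

lemma sr_SL2_gt_1_iff:
  assumes "det A = 1"
  shows "1 < sr A \<longleftrightarrow> 2 < \<bar>trace A\<bar>"
proof
  assume "2 < \<bar>trace A\<bar>"
  then obtain \<rho> \<mu> where "\<rho> + \<mu> = trace A" "\<rho> * \<mu> = 1" "1 < \<bar>\<rho>\<bar>"
    by (rule SL2_hyperbolic_roots)
  then show "1 < sr A"
    using sr_SL2_hyperbolic[OF assms] by simp
qed (use sr_SL2_elliptic[OF assms] in force)

lemma sr_SL2_bounds:
  assumes "det A = 1"
  shows "1 \<le> sr A" "\<bar>trace A\<bar> \<le> 2 * sr A" "sr A \<le> \<bar>trace A\<bar> + 1"
proof -
  have "1 \<le> sr A \<and> \<bar>trace A\<bar> \<le> 2 * sr A \<and> sr A \<le> \<bar>trace A\<bar> + 1"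
  proof (cases "\<bar>trace A\<bar> \<le> 2")
    case True
    then show ?thesis using sr_SL2_elliptic[OF assms] by simp
  next
    case False
    then obtain \<rho> \<mu> where rm: "\<rho> + \<mu> = trace A" "\<rho> * \<mu> = 1" "1 < \<bar>\<rho>\<bar>"
      using SL2_hyperbolic_roots by (metis not_le)
    have "\<bar>\<mu>\<bar> < 1"
      by (rule mult_eq_1_imp_abs_less_1[OF rm(2,3)])
    then have "\<bar>trace A\<bar> \<le> \<bar>\<rho>\<bar> + 1" "\<bar>\<rho>\<bar> \<le> \<bar>trace A\<bar> + 1"
      using abs_triangle_ineq[of \<rho> \<mu>] abs_triangle_ineq4[of "\<rho> + \<mu>" \<mu>] by (simp_all flip: rm(1))
    then show ?thesis
      using sr_SL2_hyperbolic[OF assms rm] rm(3) by linarith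
  qed
  then show "1 \<le> sr A" "\<bar>trace A\<bar> \<le> 2 * sr A" "sr A \<le> \<bar>trace A\<bar> + 1"
    by auto
qed

section \<open>Growth rates and averages of real sequences\<close>

lemma tendsto_div_Suc_of_bounded_deviation:
  fixes f :: "nat \<Rightarrow> real"
  assumes "\<forall>\<^sub>F n in sequentially. \<bar>f n - real n * L\<bar> \<le> B"
  shows "(\<lambda>n. f n / real (Suc n)) \<longlonglongrightarrow> L"
proof -
  have "(\<lambda>n. (f n - real n * L) / real (Suc n)) \<longlonglongrightarrow> 0"
  proof (rule Lim_null_comparison)
    show "\<forall>\<^sub>F n in sequentially. norm ((f n - real n * L) / real (Suc n)) \<le> B / real (Suc n)"
      using assms by eventually_elim (simp add: divide_right_mono)
    show "(\<lambda>n. B / real (Suc n)) \<longlonglongrightarrow> 0"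
      using tendsto_mult_right_zero[OF LIMSEQ_inverse_real_of_nat, of B] by (simp add: divide_inverse)
  qed
  then have "(\<lambda>n. (f n - real n * L) / real (Suc n) + L * (real n / real (Suc n))) \<longlonglongrightarrow> 0 + L * 1"
    by (intro tendsto_add tendsto_mult tendsto_const LIMSEQ_n_over_Suc_n)
  then show ?thesis
    by (simp add: diff_divide_distrib)
qed

lemma ln_growth_rate_of_comparable:
  assumes "0 < c1" "0 < \<rho>" "\<forall>\<^sub>F n in sequentially. c1 * \<rho> ^ n \<le> S n \<and> S n \<le> c2 * \<rho> ^ n"
  shows "(\<lambda>n. ln (S n) / real (Suc n)) \<longlonglongrightarrow> ln \<rho>"
proof (rule tendsto_div_Suc_of_bounded_deviation)
  show "\<forall>\<^sub>F n in sequentially. \<bar>ln (S n) - real n * ln \<rho>\<bar> \<le> max \<bar>ln c1\<bar> \<bar>ln c2\<bar>"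
    using assms(3)
  proof eventually_elim
    case (elim n)
    have pos: "0 < c1 * \<rho> ^ n"
      using assms(1,2) by simp
    have "c1 * \<rho> ^ n \<le> c2 * \<rho> ^ n"
      using elim by linarith
    then have "0 < c2"
      using assms(1,2) by (simp add: mult_le_cancel_right)
    have "ln (c1 * \<rho> ^ n) \<le> ln (S n)" "ln (S n) \<le> ln (c2 * \<rho> ^ n)"
      using elim pos by (simp_all add: ln_le_cancel_iff)
    then have "ln c1 \<le> ln (S n) - real n * ln \<rho>" "ln (S n) - real n * ln \<rho> \<le> ln c2"
      using assms(1,2) \<open>0 < c2\<close> by (simp_all add: ln_mult ln_realpow)
    then show ?case
      by linarith
  qed
qed

lemma ln_growth_rate_polynomial:
  assumes "\<And>n. 1 \<le> S n" "\<And>n. S n \<le> K * real (Suc n)"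
  shows "(\<lambda>n. ln (S n) / real (Suc n)) \<longlonglongrightarrow> 0"
proof (rule tendsto_sandwich)
  have "1 \<le> K"
    using assms[of 0] by simp
  have "ln (S n) / real (Suc n) \<le> (ln K + ln (real (Suc n))) / real (Suc n)" for n
  proof -
    have "ln (S n) \<le> ln (K * real (Suc n))"
      using assms[of n] by simp
    also have "\<dots> = ln K + ln (real (Suc n))"
      using \<open>1 \<le> K\<close> by (simp add: ln_mult)
    finally show ?thesis
      by (simp add: divide_right_mono)
  qed
  then show "\<forall>\<^sub>F n in sequentially. ln (S n) / real (Suc n) \<le> (ln K + ln (real (Suc n))) / real (Suc n)"
    by simp
  show "\<forall>\<^sub>F n in sequentially. 0 \<le> ln (S n) / real (Suc n)"
    using assms(1) by simp
  have "(\<lambda>n. ln (real (Suc n)) / real (Suc n)) \<longlonglongrightarrow> 0"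
    using lim_ln_over_n filterlim_sequentially_Suc[of "\<lambda>n. ln (real n) / real n"] by simp
  moreover have "(\<lambda>n. ln K / real (Suc n)) \<longlonglongrightarrow> 0"
    using tendsto_mult_right_zero[OF LIMSEQ_inverse_real_of_nat, of "ln K"] by (simp add: divide_inverse)
  ultimately show "(\<lambda>n. (ln K + ln (real (Suc n))) / real (Suc n)) \<longlonglongrightarrow> 0"
    using tendsto_add by (force simp: add_divide_distrib)
qed simp

lemma eventually_ge_power:
  fixes x :: real
  assumes "1 < x"
  shows "\<forall>\<^sub>F n in sequentially. \<Lambda> \<le> x ^ n"
  using filterlim_at_infinity_imp_norm_at_top[OF filterlim_realpow_sequentially_gt1[of x]] assms
  by (simp add: filterlim_at_top)

lemma card_near_ends_le:
  assumes "q \<le> n"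
  shows "card {k. k < Suc n + L \<and> (k < q \<or> n < k + q)} \<le> 2 * q + L"
proof -
  have "card {k. k < Suc n + L \<and> (k < q \<or> n < k + q)} \<le> card ({..<q} \<union> {Suc n - q..<Suc n + L})"
    by (intro card_mono) auto
  also have "\<dots> \<le> card {..<q} + card {Suc n - q..<Suc n + L}"
    by (rule card_Un_le)
  finally show ?thesis
    using assms by simp
qed

lemma sum_deviation_close_away_from_ends:
  fixes f :: "nat \<Rightarrow> real"
  assumes bounded: "\<And>k. \<bar>f k - c\<bar> \<le> D"
    and close: "\<And>k. q \<le> k \<Longrightarrow> k + q \<le> n \<Longrightarrow> \<bar>f k - c\<bar> \<le> \<delta>"
    and "q \<le> n" "0 \<le> \<delta>"
  shows "\<bar>(\<Sum>k<Suc n + L. f k) - real (Suc n) * c\<bar>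
    \<le> real (Suc n + L) * \<delta> + ((2 * real q + real L) * D + real L * \<bar>c\<bar>)"
proof -
  define Bad where "Bad = {k. k < Suc n + L \<and> (k < q \<or> n < k + q)}"
  have Bad: "Bad \<subseteq> {..<Suc n + L}" "real (card Bad) \<le> 2 * real q + real L"
    using card_near_ends_le[of q n L] assms(3) by (auto simp: Bad_def)
  have "0 \<le> D"
    using bounded[of 0] by linarith
  have "\<bar>f k - c\<bar> \<le> \<delta> + (if k \<in> Bad then D else 0)" if "k < Suc n + L" for k
    using that close[of k] bounded[of k] assms(4) by (auto simp: Bad_def)
  then have "\<bar>\<Sum>k<Suc n + L. f k - c\<bar> \<le> (\<Sum>k<Suc n + L. \<delta> + (if k \<in> Bad then D else 0))"
    by (intro order_trans[OF sum_abs sum_mono]) simp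
  also have "\<dots> = real (Suc n + L) * \<delta> + real (card Bad) * D"
  proof -
    have "(\<Sum>k<Suc n + L. if k \<in> Bad then D else 0) = (\<Sum>k\<in>{..<Suc n + L} \<inter> Bad. D)"
      by (rule sum.inter_restrict[symmetric]) simp
    also have "{..<Suc n + L} \<inter> Bad = Bad"
      using Bad(1) by blast
    finally show ?thesis
      by (simp add: sum.distrib)
  qed
  also have "\<dots> \<le> real (Suc n + L) * \<delta> + (2 * real q + real L) * D"
    using Bad(2) \<open>0 \<le> D\<close> by (simp add: mult_right_mono)
  finally have "\<bar>\<Sum>k<Suc n + L. f k - c\<bar> \<le> real (Suc n + L) * \<delta> + (2 * real q + real L) * D" .
  moreover have "(\<Sum>k<Suc n + L. f k) - real (Suc n) * c = (\<Sum>k<Suc n + L. f k - c) + real L * c"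
    by (simp add: sum_subtractf algebra_simps)
  ultimately show ?thesis
    using abs_triangle_ineq[of "\<Sum>k<Suc n + L. f k - c" "real L * c"] by (simp add: abs_mult)
qed

lemma average_tendsto_if_close_away_from_ends:
  fixes f :: "nat \<Rightarrow> nat \<Rightarrow> real"
  assumes bounded: "\<And>n k. \<bar>f n k - c\<bar> \<le> D"
    and close: "\<And>\<delta>. 0 < \<delta> \<Longrightarrow> \<exists>q. \<forall>n k. q \<le> k \<longrightarrow> k + q \<le> n \<longrightarrow> \<bar>f n k - c\<bar> \<le> \<delta>"
  shows "(\<lambda>n. (\<Sum>k<Suc n + L. f n k) / real (Suc n)) \<longlonglongrightarrow> c"
  unfolding LIMSEQ_iff real_norm_def
proof (intro allI impI)
  fix \<epsilon> :: real assume "0 < \<epsilon>"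
  define \<delta> where "\<delta> = \<epsilon> / (2 * (real L + 1))"
  have "0 < \<delta>" "(real L + 1) * \<delta> = \<epsilon> / 2"
    using \<open>0 < \<epsilon>\<close> by (simp_all add: \<delta>_def field_simps)
  obtain q where q: "\<And>n k. q \<le> k \<Longrightarrow> k + q \<le> n \<Longrightarrow> \<bar>f n k - c\<bar> \<le> \<delta>"
    using close[OF \<open>0 < \<delta>\<close>] by blast
  define C where "C = (2 * real q + real L) * D + real L * \<bar>c\<bar>"
  obtain N :: nat where N: "2 * C / \<epsilon> < real N"
    using reals_Archimedean2 by blast
  show "\<exists>no. \<forall>n\<ge>no. \<bar>(\<Sum>k<Suc n + L. f n k) / real (Suc n) - c\<bar> < \<epsilon>"
  proof (intro exI allI impI)
    fix n assume n: "max N q \<le> n"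
    have "\<bar>(\<Sum>k<Suc n + L. f n k) / real (Suc n) - c\<bar> = \<bar>(\<Sum>k<Suc n + L. f n k) - real (Suc n) * c\<bar> / real (Suc n)"
      by (simp add: field_simps abs_divide)
    also have "\<dots> \<le> (real (Suc n + L) * \<delta> + C) / real (Suc n)"
      unfolding C_def using n \<open>0 < \<delta>\<close>
      by (intro divide_right_mono sum_deviation_close_away_from_ends bounded q) auto
    also have "\<dots> = real (Suc n + L) / real (Suc n) * \<delta> + C / real (Suc n)"
      by (simp only: add_divide_distrib times_divide_eq_left)
    also have "\<dots> \<le> (real L + 1) * \<delta> + C / real (Suc n)"
      using \<open>0 < \<delta>\<close> by (intro add_right_mono mult_right_mono) (auto simp: field_simps)
    also have "\<dots> < \<epsilon>"
    proof -
      have "2 * C < \<epsilon> * real N"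
        using N \<open>0 < \<epsilon>\<close> by (simp add: field_simps)
      also have "\<dots> \<le> \<epsilon> * real (Suc n)"
        using n \<open>0 < \<epsilon>\<close> by (intro mult_left_mono) auto
      finally have "C / real (Suc n) < \<epsilon> / 2"
        by (simp add: field_simps)
      then show ?thesis
        using \<open>(real L + 1) * \<delta> = \<epsilon> / 2\<close> by linarith
    qed
    finally show "\<bar>(\<Sum>k<Suc n + L. f n k) / real (Suc n) - c\<bar> < \<epsilon>" .
  qed
qed

section \<open>The recurrence satisfied by traces of powers\<close>

definition chebyshev_rec :: "real \<Rightarrow> (nat \<Rightarrow> real) \<Rightarrow> bool" where
  "chebyshev_rec t a \<longleftrightarrow> (\<forall>k. a (Suc (Suc k)) = t * a (Suc k) - a k)"

lemma chebyshev_rec_trace_matpow: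
  assumes "det (B::real^2^2) = 1"
  shows "chebyshev_rec (trace B) (\<lambda>k. trace (G ** matpow B k))"
  using matpow_Suc_Suc_SL2[OF assms] by (simp add: chebyshev_rec_def matrix_linear_simps)

lemma chebyshev_rec_lincomb:
  assumes "chebyshev_rec t a" "chebyshev_rec t b"
  shows "chebyshev_rec t (\<lambda>k. x * a k + y * b k)"
  unfolding chebyshev_rec_def by (simp add: assms[unfolded chebyshev_rec_def] algebra_simps)

lemma chebyshev_rec_eqI:
  assumes "chebyshev_rec t a" "chebyshev_rec t b" "a 0 = b 0" "a 1 = b 1"
  shows "a k = b k"
proof -
  have "a k = b k \<and> a (Suc k) = b (Suc k)"
    by (induction k) (use assms in \<open>simp_all add: chebyshev_rec_def\<close>)
  then show ?thesis ..
qed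

lemma chebyshev_rec_power:
  assumes "\<rho>\<^sup>2 = t * \<rho> - 1"
  shows "chebyshev_rec t (\<lambda>k. \<rho> ^ k)"
proof -
  have "\<rho> ^ Suc (Suc k) = \<rho> ^ k * \<rho>\<^sup>2" for k
    by (simp add: power2_eq_square)
  then show ?thesis
    unfolding chebyshev_rec_def assms by (simp add: algebra_simps)
qed

lemma chebyshev_rec_hyperbolic_closed_form:
  assumes "\<rho> + \<mu> = t" "\<rho> * \<mu> = 1" "\<rho> \<noteq> \<mu>" "chebyshev_rec t a"
  shows "a k = (a 1 - \<mu> * a 0) / (\<rho> - \<mu>) * \<rho> ^ k + (\<rho> * a 0 - a 1) / (\<rho> - \<mu>) * \<mu> ^ k"
proof (rule chebyshev_rec_eqI[OF assms(4) chebyshev_rec_lincomb])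
  have "\<rho>\<^sup>2 = t * \<rho> - 1" "\<mu>\<^sup>2 = t * \<mu> - 1"
    using assms(1,2) by (simp_all add: power2_eq_square algebra_simps flip: assms(1))
  then show "chebyshev_rec t (\<lambda>k. \<rho> ^ k)" "chebyshev_rec t (\<lambda>k. \<mu> ^ k)"
    by (simp_all add: chebyshev_rec_power)
  have "\<rho> - \<mu> \<noteq> 0"
    using assms(3) by simp
  then show "a 0 = (a 1 - \<mu> * a 0) / (\<rho> - \<mu>) * \<rho> ^ 0 + (\<rho> * a 0 - a 1) / (\<rho> - \<mu>) * \<mu> ^ 0"
      "a 1 = (a 1 - \<mu> * a 0) / (\<rho> - \<mu>) * \<rho> ^ 1 + (\<rho> * a 0 - a 1) / (\<rho> - \<mu>) * \<mu> ^ 1"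
    using assms(2) by (simp_all add: divide_simps) (simp_all add: algebra_simps)
qed

lemma chebyshev_rec_parabolic_closed_form:
  assumes "t = 2 * s" "s\<^sup>2 = 1" "chebyshev_rec t a"
  shows "a k = s ^ k * (a 0 + real k * (s * a 1 - a 0))"
proof -
  have ss: "s * s = 1"
    using assms(2) by (simp add: power2_eq_square)
  have ss': "s * (s * x) = x" for x
    using ss by (simp add: mult.assoc[symmetric])
  have pw: "s ^ Suc (Suc k) = s ^ k" "t * (x * s ^ Suc k) = 2 * x * s ^ k" for k x
    by (simp_all add: ss' assms(1) mult.left_commute[of x])
  have "chebyshev_rec t (\<lambda>k. a 0 * s ^ k + (s * a 1 - a 0) * (real k * s ^ k))"
  proof (intro chebyshev_rec_lincomb)
    show "chebyshev_rec t (\<lambda>k. s ^ k)"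
      using assms(2) by (intro chebyshev_rec_power) (simp add: assms(1) power2_eq_square mult.assoc ss)
    show "chebyshev_rec t (\<lambda>k. real k * s ^ k)"
      unfolding chebyshev_rec_def pw by (simp add: algebra_simps)
  qed
  then have "a k = a 0 * s ^ k + (s * a 1 - a 0) * (real k * s ^ k)"
    by (rule chebyshev_rec_eqI[OF assms(3)]) (simp_all add: algebra_simps ss')
  then show ?thesis
    by (simp add: algebra_simps)
qed

definition sl2_form :: "real \<Rightarrow> real \<Rightarrow> real \<Rightarrow> real" where
  "sl2_form t x y = x\<^sup>2 - t * x * y + y\<^sup>2"

lemma chebyshev_rec_invariant:
  assumes "chebyshev_rec t a"
  shows "sl2_form t (a (Suc k)) (a k) = sl2_form t (a 1) (a 0)"
proof (induction k)
  case (Suc k)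
  have "a (Suc (Suc k)) = t * a (Suc k) - a k"
    using assms by (simp add: chebyshev_rec_def)
  moreover have "sl2_form t (t * a (Suc k) - a k) (a (Suc k)) = sl2_form t (a (Suc k)) (a k)"
    by (simp add: sl2_form_def power2_eq_square algebra_simps)
  ultimately have "sl2_form t (a (Suc (Suc k))) (a (Suc k)) = sl2_form t (a (Suc k)) (a k)"
    by simp
  then show ?case
    using Suc by simp
qed simp

lemma sl2_form_bounds:
  assumes "\<bar>t\<bar> \<le> 2"
  shows "(\<bar>x\<bar> - \<bar>y\<bar>)\<^sup>2 \<le> sl2_form t x y" "sl2_form t x y \<le> (\<bar>x\<bar> + \<bar>y\<bar>)\<^sup>2"
proof -
  have "\<bar>t * x * y\<bar> \<le> 2 * \<bar>x\<bar> * \<bar>y\<bar>"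
    using assms by (simp add: abs_mult mult_right_mono)
  moreover have "(\<bar>x\<bar> - \<bar>y\<bar>)\<^sup>2 = x\<^sup>2 - 2 * \<bar>x\<bar> * \<bar>y\<bar> + y\<^sup>2"
    "(\<bar>x\<bar> + \<bar>y\<bar>)\<^sup>2 = x\<^sup>2 + 2 * \<bar>x\<bar> * \<bar>y\<bar> + y\<^sup>2"
    by (simp_all add: power2_eq_square algebra_simps)
  ultimately show "(\<bar>x\<bar> - \<bar>y\<bar>)\<^sup>2 \<le> sl2_form t x y" "sl2_form t x y \<le> (\<bar>x\<bar> + \<bar>y\<bar>)\<^sup>2"
    unfolding sl2_form_def by (simp_all add: abs_le_iff)
qed

lemma sl2_form_nonneg: "\<bar>t\<bar> \<le> 2 \<Longrightarrow> 0 \<le> sl2_form t x y"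
  using sl2_form_bounds(1) order_trans zero_le_power2 by blast

lemma sl2_form_pos:
  assumes "\<bar>t\<bar> < 2" "y \<noteq> 0"
  shows "0 < sl2_form t x y"
proof -
  have "sl2_form t x y = (x - t / 2 * y)\<^sup>2 + (1 - t\<^sup>2 / 4) * y\<^sup>2"
    by (simp add: sl2_form_def power2_eq_square algebra_simps)
  moreover have "\<bar>t\<bar>\<^sup>2 < 2\<^sup>2"
    using assms(1) by (intro power_strict_mono) auto
  ultimately show ?thesis
    using assms(2) by (simp add: add_nonneg_pos)
qed

lemma sl2_form_lincomb_lower_bound:
  assumes t: "\<bar>t\<bar> \<le> 2" and "\<bar>u\<bar> \<le> C" "\<bar>v\<bar> \<le> C"
  shows "\<bar>l\<bar> * (\<bar>l\<bar> * sl2_form t x y - 4 * C * (\<bar>x\<bar> + \<bar>y\<bar>)) \<le> sl2_form t (l * x + u) (l * y + v)"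
proof -
  define X where "X = 2 * x * u - t * (x * v + y * u) + 2 * y * v"
  have expand: "sl2_form t (l * x + u) (l * y + v) = l\<^sup>2 * sl2_form t x y + l * X + sl2_form t u v"
    unfolding sl2_form_def X_def by (simp add: power2_eq_square algebra_simps)
  have "\<bar>x * v + y * u\<bar> \<le> \<bar>x\<bar> * C + \<bar>y\<bar> * C"
    using assms(2,3) abs_triangle_ineq[of "x * v" "y * u"]
      mult_left_mono[of "\<bar>v\<bar>" C "\<bar>x\<bar>"] mult_left_mono[of "\<bar>u\<bar>" C "\<bar>y\<bar>"]
    by (simp add: abs_mult)
  then have "\<bar>t * (x * v + y * u)\<bar> \<le> 2 * (\<bar>x\<bar> * C + \<bar>y\<bar> * C)"
    using mult_right_mono[OF t abs_ge_zero, of "x * v + y * u"] by (simp add: abs_mult)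
  moreover have "\<bar>2 * x * u\<bar> \<le> 2 * \<bar>x\<bar> * C" "\<bar>2 * y * v\<bar> \<le> 2 * \<bar>y\<bar> * C"
    using assms(2,3) by (auto simp: abs_mult intro!: mult_left_mono)
  ultimately have "\<bar>X\<bar> \<le> 4 * C * (\<bar>x\<bar> + \<bar>y\<bar>)"
    unfolding X_def by (simp add: abs_le_iff algebra_simps)
  then have "\<bar>l * X\<bar> \<le> \<bar>l\<bar> * (4 * C * (\<bar>x\<bar> + \<bar>y\<bar>))"
    by (simp add: abs_mult mult_left_mono)
  then show ?thesis
    using sl2_form_nonneg[OF t, of u v] unfolding expand
    by (simp add: power2_eq_square right_diff_distrib abs_mult_self_eq mult.assoc[symmetric] abs_le_iff)
qed

lemma chebyshev_rec_linear_growth: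
  assumes "\<bar>t\<bar> \<le> 2" "chebyshev_rec t a"
  shows "\<bar>a k\<bar> \<le> \<bar>a 0\<bar> + real k * sqrt (sl2_form t (a 1) (a 0))"
proof (induction k)
  case (Suc k)
  have "(\<bar>a (Suc k)\<bar> - \<bar>a k\<bar>)\<^sup>2 \<le> sl2_form t (a 1) (a 0)"
    using sl2_form_bounds(1)[OF assms(1), of "a (Suc k)" "a k"] chebyshev_rec_invariant[OF assms(2), of k]
    by simp
  then have "\<bar>a (Suc k)\<bar> - \<bar>a k\<bar> \<le> sqrt (sl2_form t (a 1) (a 0))"
    by (rule real_le_rsqrt)
  then show ?case
    using Suc by (simp add: distrib_right)
qed simp

lemma chebyshev_rec_frequently_large_if_form_gt_16:
  assumes "\<bar>t\<bar> \<le> 2" "chebyshev_rec t a" "16 < sl2_form t (a 1) (a 0)"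
  shows "\<exists>\<^sub>F k in sequentially. 2 < \<bar>a k\<bar>"
proof -
  have "2 < \<bar>a k\<bar> \<or> 2 < \<bar>a (Suc k)\<bar>" for k
  proof (rule ccontr)
    assume "\<not> ?thesis"
    then have "(\<bar>a (Suc k)\<bar> + \<bar>a k\<bar>)\<^sup>2 \<le> 4\<^sup>2"
      by (intro power_mono) auto
    moreover have "sl2_form t (a 1) (a 0) \<le> (\<bar>a (Suc k)\<bar> + \<bar>a k\<bar>)\<^sup>2"
      using sl2_form_bounds(2)[OF assms(1), of "a (Suc k)" "a k"] chebyshev_rec_invariant[OF assms(2), of k]
      by simp
    ultimately show False
      using assms(3) by simp
  qed
  then show ?thesis
    unfolding frequently_sequentially by (meson le_SucI order_refl)
qed

lemma chebyshev_rec_frequently_large_parabolic: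
  assumes "\<bar>t\<bar> = 2" "chebyshev_rec t a" "2 < \<bar>a 0\<bar>"
  shows "\<exists>\<^sub>F k in sequentially. 2 < \<bar>a k\<bar>"
proof -
  define s where "s = t / 2"
  define d where "d = s * a 1 - a 0"
  have s: "\<bar>s\<bar> = 1" "s\<^sup>2 = 1"
  proof -
    have "t = 2 \<or> t = -2"
      using assms(1) by arith
    then show "\<bar>s\<bar> = 1" "s\<^sup>2 = 1"
      by (auto simp: s_def)
  qed
  have ak: "\<bar>a k\<bar> = \<bar>a 0 + real k * d\<bar>" for k
    using chebyshev_rec_parabolic_closed_form[OF _ s(2) assms(2), of k] s(1)
    by (simp add: s_def d_def abs_mult power_abs)
  have "\<forall>\<^sub>F k in sequentially. 2 < \<bar>a 0 + real k * d\<bar>"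
  proof (cases "d = 0")
    case False
    have "2 < \<bar>a 0 + real k * d\<bar>" if "(\<bar>a 0\<bar> + 3) / \<bar>d\<bar> \<le> real k" for k
    proof -
      have "\<bar>a 0\<bar> + 3 \<le> real k * \<bar>d\<bar>"
        using that False by (simp add: field_simps)
      then show ?thesis
        by (simp add: abs_mult abs_le_iff abs_less_iff)
    qed
    then show ?thesis
      unfolding eventually_sequentially by (meson nat_ceiling_le_eq order_refl)
  qed (use assms(3) in simp)
  then show ?thesis
    unfolding ak by (simp add: eventually_frequently)
qed

lemma chebyshev_rec_eventually_frequently_large:
  assumes t: "\<bar>t\<bar> \<le> 2" and c: "chebyshev_rec t c" "c 0 \<noteq> 0"
    and l_inf: "filterlim l at_infinity F"
    and e: "\<And>m. chebyshev_rec t (e m)" "\<And>m. \<bar>e m 0\<bar> \<le> C" "\<And>m. \<bar>e m 1\<bar> \<le> C"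
  shows "\<forall>\<^sub>F m in F. \<exists>\<^sub>F k in sequentially. 2 < \<bar>l m * c k + e m k\<bar>"
proof -
  have l: "\<forall>\<^sub>F m in F. \<Lambda> \<le> \<bar>l m\<bar>" for \<Lambda>
    using filterlim_at_infinity_imp_norm_at_top[OF l_inf] by (simp add: filterlim_at_top)
  have rec: "chebyshev_rec t (\<lambda>k. l m * c k + e m k)" for m
    using chebyshev_rec_lincomb[OF c(1) e(1), of "l m" 1] by simp
  show ?thesis
  proof (cases "\<bar>t\<bar> = 2")
    case True
    show ?thesis
      using l[of "(C + 3) / \<bar>c 0\<bar>"]
    proof (rule eventually_mono)
      fix m assume "(C + 3) / \<bar>c 0\<bar> \<le> \<bar>l m\<bar>"
      then have "C + 3 \<le> \<bar>l m * c 0\<bar>"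
        using c(2) by (simp add: field_simps abs_mult)
      then have "2 < \<bar>l m * c 0 + e m 0\<bar>"
        using e(2)[of m] by linarith
      then show "\<exists>\<^sub>F k in sequentially. 2 < \<bar>l m * c k + e m k\<bar>"
        using chebyshev_rec_frequently_large_parabolic[OF True rec] by simp
    qed
  next
    case False
    define Q where "Q = sl2_form t (c 1) (c 0)"
    define K where "K = 4 * C * (\<bar>c 1\<bar> + \<bar>c 0\<bar>)"
    have Q: "0 < Q"
      unfolding Q_def using False t c(2) by (intro sl2_form_pos) auto
    show ?thesis
      using l[of "max 1 ((K + 17) / Q)"]
    proof (rule eventually_mono)
      fix m assume lm: "max 1 ((K + 17) / Q) \<le> \<bar>l m\<bar>"
      then have "1 * 17 \<le> \<bar>l m\<bar> * (\<bar>l m\<bar> * Q - K)"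
        using Q by (intro mult_mono) (auto simp: field_simps)
      also have "\<dots> \<le> sl2_form t (l m * c 1 + e m 1) (l m * c 0 + e m 0)"
        unfolding Q_def K_def by (rule sl2_form_lincomb_lower_bound[OF t e(3) e(2)])
      finally show "\<exists>\<^sub>F k in sequentially. 2 < \<bar>l m * c k + e m k\<bar>"
        using chebyshev_rec_frequently_large_if_form_gt_16[OF t rec] by simp
    qed
  qed
qed

lemma chebyshev_rec_hyperbolic_growth:
  assumes "\<rho> + \<mu> = t" "\<rho> * \<mu> = 1" "1 < \<bar>\<rho>\<bar>" "chebyshev_rec t a" "a 1 \<noteq> \<mu> * a 0"
  obtains c1 c2 where "0 < c1" "\<forall>\<^sub>F n in sequentially. c1 * \<bar>\<rho>\<bar> ^ n \<le> \<bar>a n\<bar> \<and> \<bar>a n\<bar> \<le> c2 * \<bar>\<rho>\<bar> ^ n"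
proof -
  have "\<bar>\<mu>\<bar> < 1"
    using assms(2,3) by (rule mult_eq_1_imp_abs_less_1)
  then have "\<rho> \<noteq> \<mu>"
    using assms(3) by auto
  define \<alpha> where "\<alpha> = (a 1 - \<mu> * a 0) / (\<rho> - \<mu>)"
  define \<beta> where "\<beta> = (\<rho> * a 0 - a 1) / (\<rho> - \<mu>)"
  have "\<alpha> \<noteq> 0"
    using assms(5) \<open>\<rho> \<noteq> \<mu>\<close> by (simp add: \<alpha>_def)
  have an: "a n = \<alpha> * \<rho> ^ n + \<beta> * \<mu> ^ n" for n
    unfolding \<alpha>_def \<beta>_def by (rule chebyshev_rec_hyperbolic_closed_form[OF assms(1,2) \<open>\<rho> \<noteq> \<mu>\<close> assms(4)])
  have \<mu>n: "\<bar>\<beta> * \<mu> ^ n\<bar> \<le> \<bar>\<beta>\<bar>" for n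
    using \<open>\<bar>\<mu>\<bar> < 1\<close> by (simp add: abs_mult power_abs mult_left_le power_le_one)
  show ?thesis
  proof (rule that)
    show "0 < \<bar>\<alpha>\<bar> / 2"
      using \<open>\<alpha> \<noteq> 0\<close> by simp
    show "\<forall>\<^sub>F n in sequentially. \<bar>\<alpha>\<bar> / 2 * \<bar>\<rho>\<bar> ^ n \<le> \<bar>a n\<bar> \<and> \<bar>a n\<bar> \<le> (\<bar>\<alpha>\<bar> + \<bar>\<beta>\<bar>) * \<bar>\<rho>\<bar> ^ n"
      using eventually_ge_power[OF assms(3), of "max 1 (2 * \<bar>\<beta>\<bar> / \<bar>\<alpha>\<bar>)"]
    proof eventually_elim
      case (elim n)
      then have "\<bar>\<beta>\<bar> \<le> \<bar>\<alpha>\<bar> / 2 * \<bar>\<rho>\<bar> ^ n" "\<bar>\<beta>\<bar> \<le> \<bar>\<beta>\<bar> * \<bar>\<rho>\<bar> ^ n"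
        using \<open>\<alpha> \<noteq> 0\<close> mult_left_mono[of 1 "\<bar>\<rho>\<bar> ^ n" "\<bar>\<beta>\<bar>"] by (simp_all add: field_simps)
      moreover have "\<bar>\<alpha> * \<rho> ^ n\<bar> = \<bar>\<alpha>\<bar> * \<bar>\<rho>\<bar> ^ n"
        by (simp add: abs_mult power_abs)
      ultimately show ?case
        using \<mu>n[of n] abs_triangle_ineq[of "\<alpha> * \<rho> ^ n" "\<beta> * \<mu> ^ n"]
          abs_triangle_ineq2[of "\<alpha> * \<rho> ^ n" "- \<beta> * \<mu> ^ n"]
        by (simp add: an algebra_simps)
    qed
  qed
qed

lemma chebyshev_rec_ln_growth_elliptic:
  assumes t: "\<bar>t\<bar> \<le> 2" and rec: "chebyshev_rec t a"
    and S: "\<And>n. 1 \<le> S n" "\<And>n. S n \<le> \<bar>a n\<bar> + 1"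
  shows "(\<lambda>n. ln (S n) / real (Suc n)) \<longlonglongrightarrow> 0"
proof (rule ln_growth_rate_polynomial[OF S(1)])
  define K where "K = \<bar>a 0\<bar> + sqrt (sl2_form t (a 1) (a 0)) + 1"
  fix n
  have "S n \<le> \<bar>a 0\<bar> + real n * sqrt (sl2_form t (a 1) (a 0)) + 1"
    using S(2)[of n] chebyshev_rec_linear_growth[OF t rec, of n] by linarith
  also have "\<dots> \<le> K * real (Suc n)"
    using sl2_form_nonneg[OF t] by (simp add: K_def algebra_simps)
  finally show "S n \<le> K * real (Suc n)" .
qed

lemma chebyshev_rec_ln_growth_hyperbolic:
  assumes rm: "\<rho> + \<mu> = t" "\<rho> * \<mu> = 1" "1 < \<bar>\<rho>\<bar>" and rec: "chebyshev_rec t a" "a 1 \<noteq> \<mu> * a 0"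
    and S: "\<And>n. \<bar>a n\<bar> \<le> 2 * S n" "\<And>n. S n \<le> \<bar>a n\<bar> + 1"
  shows "(\<lambda>n. ln (S n) / real (Suc n)) \<longlonglongrightarrow> ln \<bar>\<rho>\<bar>"
proof -
  obtain c1 c2 where c: "0 < c1"
    "\<forall>\<^sub>F n in sequentially. c1 * \<bar>\<rho>\<bar> ^ n \<le> \<bar>a n\<bar> \<and> \<bar>a n\<bar> \<le> c2 * \<bar>\<rho>\<bar> ^ n"
    using chebyshev_rec_hyperbolic_growth[OF rm rec] .
  show ?thesis
  proof (rule ln_growth_rate_of_comparable)
    show "\<forall>\<^sub>F n in sequentially. c1 / 2 * \<bar>\<rho>\<bar> ^ n \<le> S n \<and> S n \<le> (c2 + 1) * \<bar>\<rho>\<bar> ^ n"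
      using c(2)
    proof eventually_elim
      case (elim n)
      have "1 \<le> \<bar>\<rho>\<bar> ^ n"
        using rm(3) by simp
      then show ?case
        using elim S(1,2)[of n] by (simp add: algebra_simps)
    qed
  qed (use c(1) rm(3) in auto)
qed

section \<open>Traces along excursions\<close>

text \<open>The traces \<open>tr (G B\<^sup>k)\<close> are \<open>a \<rho>\<^sup>k + b \<mu>\<^sup>k\<close> with \<open>a \<noteq> 0\<close>.\<close>

definition full_trace_growth :: "real^2^2 \<Rightarrow> real^2^2 \<Rightarrow> bool" where
  "full_trace_growth G B \<longleftrightarrow>
     (\<exists>\<rho> \<mu>. \<rho> + \<mu> = trace B \<and> \<rho> * \<mu> = 1 \<and> 1 < \<bar>\<rho>\<bar> \<and> trace (G ** B) \<noteq> \<mu> * trace G)"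

lemma ln_sr_growth_rate:
  assumes "det B = 1" "det G = 1" "\<bar>trace B\<bar> \<le> 2 \<or> full_trace_growth G B"
  shows "(\<lambda>n. ln (sr (G ** matpow B n)) / real (Suc n)) \<longlonglongrightarrow> ln (sr B)"
proof -
  have rec: "chebyshev_rec (trace B) (\<lambda>k. trace (G ** matpow B k))"
    using assms(1) by (rule chebyshev_rec_trace_matpow)
  have "det (G ** matpow B n) = 1" for n
    using assms(1,2) by (simp add: det_mul det_matpow)
  note S = sr_SL2_bounds[OF this]
  show ?thesis
    using assms(3) unfolding full_trace_growth_def
  proof (elim disjE exE conjE)
    assume t: "\<bar>trace B\<bar> \<le> 2"
    then show ?thesis
      using chebyshev_rec_ln_growth_elliptic[OF t rec S(1,3)] sr_SL2_elliptic[OF assms(1)] by simp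
  next
    fix \<rho> \<mu> assume rm: "\<rho> + \<mu> = trace B" "\<rho> * \<mu> = 1" "1 < \<bar>\<rho>\<bar>"
      and "trace (G ** B) \<noteq> \<mu> * trace G"
    then show ?thesis
      using chebyshev_rec_ln_growth_hyperbolic[OF rm rec _ S(2,3)] sr_SL2_hyperbolic[OF assms(1) rm] by simp
  qed
qed

lemma full_trace_growth_or_square:
  fixes B G :: "real^2^2"
  assumes "det G = 1" "2 < \<bar>trace B\<bar>"
  shows "full_trace_growth G B \<or> full_trace_growth (G ** G) B"
proof -
  obtain \<rho> \<mu> where rm: "\<rho> + \<mu> = trace B" "\<rho> * \<mu> = 1" "1 < \<bar>\<rho>\<bar>"
    using assms(2) by (rule SL2_hyperbolic_roots)
  then have "\<rho> \<noteq> \<mu>"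
    using mult_eq_1_imp_abs_less_1[OF rm(2,3)] by auto
  have "trace (G ** G ** B) - \<mu> * trace (G ** G) = trace G * (trace (G ** B) - \<mu> * trace G) - (\<rho> - \<mu>)"
    using assms(1) by (simp add: cayley_hamilton_2x2 matrix_linear_simps trace_I algebra_simps flip: rm(1))
  then have "trace (G ** B) \<noteq> \<mu> * trace G \<or> trace (G ** G ** B) \<noteq> \<mu> * trace (G ** G)"
    using \<open>\<rho> \<noteq> \<mu>\<close> by auto
  then show ?thesis
    unfolding full_trace_growth_def using rm by blast
qed

lemma eventually_frequently_large_trace:
  fixes B R Y Z :: "real^2^2"
  assumes B: "det B = 1" "\<bar>trace B\<bar> \<le> 2" and "c \<noteq> 0" "trace R \<noteq> 0" "1 < \<bar>\<rho>\<bar>" "\<bar>\<nu>\<bar> \<le> 1"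
  shows "\<forall>\<^sub>F m in sequentially. \<exists>\<^sub>F k in sequentially.
           2 < \<bar>trace (((c * \<rho> ^ m) *\<^sub>R R + (Y + \<nu> ^ m *\<^sub>R Z)) ** matpow B k)\<bar>"
proof -
  define C where "C = \<bar>trace Y\<bar> + \<bar>trace Z\<bar> + \<bar>trace (Y ** B)\<bar> + \<bar>trace (Z ** B)\<bar>"
  have \<nu>: "\<bar>\<nu> ^ m\<bar> \<le> 1" for m
    using assms(6) by (simp add: power_abs power_le_one)
  have "\<forall>\<^sub>F m in sequentially. \<exists>\<^sub>F k in sequentially.
      2 < \<bar>(c * \<rho> ^ m) * trace (R ** matpow B k) + trace ((Y + \<nu> ^ m *\<^sub>R Z) ** matpow B k)\<bar>"
  proof (rule chebyshev_rec_eventually_frequently_large[OF B(2) chebyshev_rec_trace_matpow[OF B(1)]])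
    show "filterlim (\<lambda>m. c * \<rho> ^ m) at_infinity sequentially"
      using assms(3,5) by (intro tendsto_mult_filterlim_at_infinity filterlim_realpow_sequentially_gt1) auto
    show "\<bar>trace ((Y + \<nu> ^ m *\<^sub>R Z) ** matpow B 0)\<bar> \<le> C" for m
      using abs_trace_add_scaleR_le[OF \<nu>[of m], of Y Z] unfolding C_def by simp
    show "\<bar>trace ((Y + \<nu> ^ m *\<^sub>R Z) ** matpow B 1)\<bar> \<le> C" for m
      using abs_trace_add_scaleR_le[OF \<nu>[of m], of "Y ** B" "Z ** B"] unfolding C_def
      by (simp add: matrix_add_rdistrib scalar_matrix_assoc[symmetric])
  qed (use assms(4) B(1) chebyshev_rec_trace_matpow in auto)
  then show ?thesis
    by (simp add: matrix_linear_simps)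
qed

section \<open>Words, excursions and periodic orbits\<close>

fun path_prod :: "(nat \<Rightarrow> nat \<Rightarrow> real^2^2) \<Rightarrow> nat list \<Rightarrow> real^2^2" where
  "path_prod M [] = mat 1"
| "path_prod M [a] = mat 1"
| "path_prod M (a # b # xs) = path_prod M (b # xs) ** M a b"

lemma path_prod_append: "path_prod M (xs @ a # ys) = path_prod M (a # ys) ** path_prod M (xs @ [a])"
proof (induction xs)
  case (Cons x xs)
  then show ?case
    by (cases xs) (simp_all add: matrix_mul_assoc)
qed simp

lemma path_prod_replicate: "path_prod M (replicate (Suc n) i) = matpow (M i i) n"
  by (induction n) auto

lemma det_path_prod:
  assumes "\<forall>a\<in>set xs. \<forall>b\<in>set xs. det (M a b) = 1"
  shows "det (path_prod M xs) = 1"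
  using assms by (induction M xs rule: path_prod.induct) (auto simp: det_mul)

lemma cpow_eq_path_prod: "cpow M x n = path_prod M (map (\<lambda>k. x (int k)) [0..<Suc n])"
proof (induction n)
  case (Suc n)
  have "map (\<lambda>k. x (int k)) [0..<Suc (Suc n)] = map (\<lambda>k. x (int k)) [0..<n] @ x (int n) # [x (int n + 1)]"
    by (simp add: add.commute)
  then show ?case
    using Suc path_prod_append[of M "map (\<lambda>k. x (int k)) [0..<n]" "x (int n)" "[x (int n + 1)]"]
    by (simp add: add.commute)
qed simp

lemma per_of_nat: "w \<noteq> [] \<Longrightarrow> per w (int k) = w ! (k mod length w)"
  unfolding per_def by (metis nat_int of_nat_mod)

lemma per_upt:
  assumes "w \<noteq> []"
  shows "map (\<lambda>k. per w (int k)) [0..<Suc (length w)] = w @ [w ! 0]"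
  using assms by (intro nth_equalityI) (auto simp: per_of_nat nth_append less_Suc_eq simp del: upt_Suc)

definition excursion :: "(nat \<Rightarrow> nat \<Rightarrow> real^2^2) \<Rightarrow> nat \<Rightarrow> nat list \<Rightarrow> real^2^2" where
  "excursion M i u = path_prod M (i # u @ [i])"

lemma cpow_replicate_append:
  "cpow M (per (replicate (Suc n) i @ u)) (length (replicate (Suc n) i @ u)) = excursion M i u ** matpow (M i i) n"
proof -
  define w where "w = replicate (Suc n) i @ u"
  have "w \<noteq> []" "w ! 0 = i"
    by (simp_all add: w_def)
  then have "cpow M (per w) (length w) = path_prod M (w @ [i])"
    using cpow_eq_path_prod per_upt by simp
  also have "w @ [i] = replicate n i @ i # (u @ [i])"
    by (simp add: w_def replicate_append_same[symmetric])
  also have "path_prod M \<dots> = excursion M i u ** matpow (M i i) n"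
    using path_prod_append[of M "replicate n i" i "u @ [i]"]
    by (simp add: excursion_def replicate_append_same path_prod_replicate[unfolded replicate_Suc])
  finally show ?thesis
    by (simp add: w_def)
qed

lemma det_excursion:
  assumes "\<forall>a\<in>{1,2,3}. \<forall>b\<in>{1,2,3}. det (M a b) = 1" "set u \<subseteq> {1,2,3}" "i \<in> {1,2,3}"
  shows "det (excursion M i u) = 1"
  unfolding excursion_def using assms by (intro det_path_prod) auto

lemma excursion_append: "excursion M i (u @ i # v) = excursion M i v ** excursion M i u"
  unfolding excursion_def using path_prod_append[of M "i # u" i "v @ [i]"] by simp

lemma excursion_replicate: "excursion M i (replicate (Suc m) j) = M j i ** matpow (M j j) m ** M i j"
proof -
  have "path_prod M (j # replicate m j @ [i]) = path_prod M (replicate m j @ j # [i])"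
    by (simp add: replicate_app_Cons_same)
  also have "\<dots> = M j i ** matpow (M j j) m"
    using path_prod_append[of M "replicate m j" j "[i]"]
    by (simp add: replicate_append_same path_prod_replicate[unfolded replicate_Suc])
  finally have "path_prod M (j # replicate m j @ [i]) = M j i ** matpow (M j j) m" .
  then show ?thesis
    unfolding excursion_def using path_prod_append[of M "[i]" j "replicate m j @ [i]"] by simp
qed

definition orbit_period :: "((int \<Rightarrow> nat) \<Rightarrow> real) \<Rightarrow> nat list \<Rightarrow> real" where
  "orbit_period r w = (\<Sum>k<length w. r ((shift ^^ k) (per w)))"

lemma lyap_eq: "lyap r M w = ln (sr (cpow M (per w) (length w))) / orbit_period r w"
  by (simp add: lyap_def orbit_period_def)

lemma lyap_single: "lyap r M [i] = ln (sr (M i i)) / r (\<lambda>_. i)"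
  by (simp add: lyap_def per_def)

lemma funpow_shift: "(shift ^^ k) x = (\<lambda>j. x (j + int k))"
  by (induction k arbitrary: x) (auto simp: shift_def algebra_simps)

lemma funpow_shift_in_Sigma3: "x \<in> Sigma3 \<Longrightarrow> (shift ^^ k) x \<in> Sigma3"
  by (simp add: funpow_shift Sigma3_def)

lemma per_in_Sigma3:
  assumes "w \<noteq> []" "set w \<subseteq> {1,2,3}"
  shows "per w \<in> Sigma3"
proof -
  have "nat (j mod int (length w)) < length w" for j
    using assms(1) by (simp add: nat_less_iff)
  then have "per w j \<in> set w" for j
    by (simp add: per_def)
  then show ?thesis
    using assms(2) by (auto simp: Sigma3_def)
qed

lemma orbit_period_pos:
  assumes "\<forall>x\<in>Sigma3. 0 < r x" "w \<noteq> []" "set w \<subseteq> {1,2,3}"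
  shows "0 < orbit_period r w"
  unfolding orbit_period_def using assms funpow_shift_in_Sigma3 per_in_Sigma3
  by (intro sum_pos) auto

lemma compact_Sigma3: "compact Sigma3"
proof -
  have "Sigma3 = PiE UNIV (\<lambda>_. {1,2,3})"
    by (auto simp: Sigma3_def PiE_def extensional_def)
  moreover have "compactin (product_topology (\<lambda>_. euclidean) UNIV) (PiE (UNIV::int set) (\<lambda>_. {1,2,3::nat}))"
    by (subst compactin_PiE) (simp add: finite_imp_compact)
  ultimately show ?thesis
    by (simp add: euclidean_product_topology)
qed

lemma continuous_on_Sigma3_cylinder:
  fixes r :: "(int \<Rightarrow> nat) \<Rightarrow> real"
  assumes "continuous_on Sigma3 r" "x \<in> Sigma3" "0 < \<delta>"
  obtains q :: nat where "\<And>y. y \<in> Sigma3 \<Longrightarrow> (\<forall>j. \<bar>j\<bar> \<le> int q \<longrightarrow> y j = x j) \<Longrightarrow> \<bar>r y - r x\<bar> < \<delta>"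
proof -
  obtain A where A: "open A" "x \<in> A" "\<forall>y\<in>Sigma3. y \<in> A \<longrightarrow> r y \<in> ball (r x) \<delta>"
    using assms continuous_on_topological[of Sigma3 r] by (metis centre_in_ball open_ball)
  have "openin (product_topology (\<lambda>i. euclidean) UNIV) A"
    using A(1) by (simp add: open_fun_def)
  from product_topology_open_contains_basis[OF this A(2)] obtain X where
    X: "x \<in> (\<Pi>\<^sub>E i\<in>UNIV. X i)" "finite {i. X i \<noteq> UNIV}" "(\<Pi>\<^sub>E i\<in>UNIV. X i) \<subseteq> A"
    by auto
  define q where "q = Max (insert 0 ((\<lambda>i. nat \<bar>i\<bar>) ` {i. X i \<noteq> UNIV}))"
  have q: "\<bar>i\<bar> \<le> int q" if "X i \<noteq> UNIV" for i
  proof -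
    have "nat \<bar>i\<bar> \<le> q"
      unfolding q_def using X(2) that by (intro Max_ge) auto
    then show ?thesis
      by linarith
  qed
  show ?thesis
  proof (rule that)
    fix y assume y: "y \<in> Sigma3" "\<forall>j. \<bar>j\<bar> \<le> int q \<longrightarrow> y j = x j"
    have "y \<in> (\<Pi>\<^sub>E i\<in>UNIV. X i)"
      using X(1) y(2) q by (auto simp: PiE_iff) (metis UNIV_I)
    then show "\<bar>r y - r x\<bar> < \<delta>"
      using A(3) X(3) y(1) by (force simp: dist_real_def abs_minus_commute)
  qed
qed

lemma funpow_shift_per_replicate:
  assumes "0 \<le> j + int k" "j + int k \<le> int n"
  shows "(shift ^^ k) (per (replicate (Suc n) i @ u)) j = i"
proof -
  have "(j + int k) mod int (length (replicate (Suc n) i @ u)) = j + int k"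
    using assms by (intro mod_pos_pos_trivial) auto
  moreover have "nat (j + int k) < Suc n"
    using assms by linarith
  ultimately show ?thesis
    by (simp add: funpow_shift per_def nth_append del: replicate_Suc)
qed

lemma orbit_period_replicate_tendsto:
  assumes r: "continuous_on Sigma3 r" and u: "set u \<subseteq> {1,2,3}" and i: "i \<in> {1,2,3}"
  shows "(\<lambda>n. orbit_period r (replicate (Suc n) i @ u) / real (Suc n)) \<longlonglongrightarrow> r (\<lambda>_. i)"
proof -
  define f where "f n k = r ((shift ^^ k) (per (replicate (Suc n) i @ u)))" for n k
  have const_i: "(\<lambda>_. i) \<in> Sigma3"
    using i by (simp add: Sigma3_def)
  have f_in: "(shift ^^ k) (per (replicate (Suc n) i @ u)) \<in> Sigma3" for n k
    using u i by (intro funpow_shift_in_Sigma3 per_in_Sigma3) auto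
  obtain R where R: "\<forall>x\<in>Sigma3. \<bar>r x\<bar> \<le> R"
    using compact_imp_bounded[OF compact_continuous_image[OF r compact_Sigma3]]
    by (auto simp: bounded_real)
  have "(\<lambda>n. (\<Sum>k<Suc n + length u. f n k) / real (Suc n)) \<longlonglongrightarrow> r (\<lambda>_. i)"
  proof (rule average_tendsto_if_close_away_from_ends)
    show "\<bar>f n k - r (\<lambda>_. i)\<bar> \<le> 2 * R" for n k
      using R f_in[of k n] const_i unfolding f_def by (smt (verit))
    fix \<delta> :: real assume "0 < \<delta>"
    then obtain q :: nat where q: "\<And>y. y \<in> Sigma3 \<Longrightarrow> (\<forall>j. \<bar>j\<bar> \<le> int q \<longrightarrow> y j = i) \<Longrightarrow> \<bar>r y - r (\<lambda>_. i)\<bar> < \<delta>"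
      using continuous_on_Sigma3_cylinder[OF r const_i] by metis
    have "\<bar>f n k - r (\<lambda>_. i)\<bar> \<le> \<delta>" if "q \<le> k" "k + q \<le> n" for n k
    proof -
      have "\<forall>j. \<bar>j\<bar> \<le> int q \<longrightarrow> (shift ^^ k) (per (replicate (Suc n) i @ u)) j = i"
        using that by (intro allI impI funpow_shift_per_replicate) auto
      then show ?thesis
        unfolding f_def by (intro less_imp_le[OF q] f_in)
    qed
    then show "\<exists>q. \<forall>n k. q \<le> k \<longrightarrow> k + q \<le> n \<longrightarrow> \<bar>f n k - r (\<lambda>_. i)\<bar> \<le> \<delta>"
      by blast
  qed
  then show ?thesis
    by (simp add: orbit_period_def f_def)
qed

lemma lyap_replicate_tendsto:
  assumes r: "continuous_on Sigma3 r" "\<forall>x\<in>Sigma3. 0 < r x"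
    and N: "\<forall>a\<in>{1,2,3}. \<forall>b\<in>{1,2,3}. det (N a b) = 1"
    and u: "set u \<subseteq> {1,2,3}" and i: "i \<in> {1,2,3}"
    and growth: "\<bar>trace (N i i)\<bar> \<le> 2 \<or> full_trace_growth (excursion N i u) (N i i)"
  shows "(\<lambda>n. lyap r N (replicate (Suc n) i @ u)) \<longlonglongrightarrow> lyap r N [i]"
proof -
  have "det (excursion N i u) = 1"
    using N u i by (rule det_excursion)
  then have "(\<lambda>n. ln (sr (excursion N i u ** matpow (N i i) n)) / real (Suc n)) \<longlonglongrightarrow> ln (sr (N i i))"
    using N i growth by (intro ln_sr_growth_rate) auto
  then have "(\<lambda>n. (ln (sr (excursion N i u ** matpow (N i i) n)) / real (Suc n))
      / (orbit_period r (replicate (Suc n) i @ u) / real (Suc n))) \<longlonglongrightarrow> ln (sr (N i i)) / r (\<lambda>_. i)"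
    using r i by (intro tendsto_divide orbit_period_replicate_tendsto u) (auto simp: Sigma3_def)
  moreover have "lyap r N (replicate (Suc n) i @ u) = (ln (sr (excursion N i u ** matpow (N i i) n)) / real (Suc n))
      / (orbit_period r (replicate (Suc n) i @ u) / real (Suc n))" for n
    unfolding lyap_eq cpow_replicate_append by simp
  ultimately show ?thesis
    by (simp add: lyap_single del: replicate_Suc)
qed

lemma lyap_single_eq_0_iff:
  assumes "\<forall>x\<in>Sigma3. 0 < r x" "det (M i i) = 1" "i \<in> {1,2,3}"
  shows "lyap r M [i] = 0 \<longleftrightarrow> \<bar>trace (M i i)\<bar> \<le> 2"
proof -
  have "0 < r (\<lambda>_. i)"
    using assms(1,3) by (simp add: Sigma3_def)
  moreover have "1 \<le> sr (M i i)"
    by (rule sr_SL2_bounds(1)[OF assms(2)])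
  ultimately have "lyap r M [i] = 0 \<longleftrightarrow> \<not> 1 < sr (M i i)"
    by (auto simp: lyap_single)
  then show ?thesis
    using sr_SL2_gt_1_iff[OF assms(2)] by linarith
qed

lemma lyap_replicate_pos:
  assumes "\<forall>x\<in>Sigma3. 0 < r x" "\<forall>a\<in>{1,2,3}. \<forall>b\<in>{1,2,3}. det (M a b) = 1"
    and "set u \<subseteq> {1,2,3}" "i \<in> {1,2,3}"
    and "2 < \<bar>trace (excursion M i u ** matpow (M i i) n)\<bar>"
  shows "0 < lyap r M (replicate (Suc n) i @ u)"
proof -
  have "det (M i i) = 1"
    using assms(2,4) by blast
  then have "det (excursion M i u ** matpow (M i i) n) = 1"
    using det_excursion[OF assms(2-4)] by (simp add: det_mul det_matpow)
  then have "1 < sr (excursion M i u ** matpow (M i i) n)"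
    using assms(5) sr_SL2_gt_1_iff by blast
  then have "0 < ln (sr (excursion M i u ** matpow (M i i) n))"
    by simp
  moreover have "0 < orbit_period r (replicate (Suc n) i @ u)"
    using assms(1,3,4) by (intro orbit_period_pos) auto
  ultimately show ?thesis
    unfolding lyap_eq cpow_replicate_append by simp
qed

section \<open>Choice of the words\<close>

lemma excursion_family_through_1:
  fixes M :: "nat \<Rightarrow> nat \<Rightarrow> real^2^2"
  assumes "det (M i 1) = 1" "det (M 1 i) = 1" "trace P = 1" "i \<in> {1,2,3}"
  obtains u :: "nat \<Rightarrow> nat list" and H :: "real^2^2" where "\<And>m. set (u m) \<subseteq> {1,2,3}"
    "\<And>m. excursion M i (u m) = M 1 i ** matpow (M 1 1) m ** M i 1 ** H"
    "trace (M 1 i ** P ** M i 1 ** H) \<noteq> 0"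
proof (cases "trace (P ** (M i 1 ** M 1 i)) = 0")
  case False
  show ?thesis
  proof (rule that[of "\<lambda>m. replicate (Suc m) 1" "mat 1"])
    show "trace (M 1 i ** P ** M i 1 ** mat 1) \<noteq> 0"
      using False by (metis matrix_mul_rid matrix_mul_assoc trace_mul_sym)
  qed (simp_all add: excursion_replicate del: replicate_Suc)
next
  case True
  \<comment> \<open>pass through \<open>1\<close> twice: \<open>tr (P K\<^sup>2) = tr K tr (P K) - tr P = -1\<close> by Cayley-Hamilton\<close>
  define K where "K = M i 1 ** M 1 i"
  have "trace (M 1 i ** P ** M i 1 ** (M 1 i ** M i 1)) = trace (P ** (K ** K))"
    by (metis K_def matrix_mul_assoc trace_mul_sym)
  also have "\<dots> = -1"
  proof -
    have "det K = 1"
      using assms(1,2) by (simp add: K_def det_mul)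
    then show ?thesis
      using True assms(3) by (simp add: cayley_hamilton_2x2 matrix_linear_simps trace_I K_def)
  qed
  finally show ?thesis
  proof (intro that[of "\<lambda>m. [1] @ i # replicate (Suc m) 1" "M 1 i ** M i 1"])
    show "set ([1] @ i # replicate (Suc m) 1) \<subseteq> {1,2,3}" for m
      using assms(4) by auto
    show "excursion M i ([1] @ i # replicate (Suc m) 1) = M 1 i ** matpow (M 1 1) m ** M i 1 ** (M 1 i ** M i 1)" for m
      by (simp only: excursion_append excursion_replicate) (simp add: excursion_def)
  qed simp
qed

lemma excursions_through_hyperbolic_symbol:
  fixes M :: "nat \<Rightarrow> nat \<Rightarrow> real^2^2"
  assumes dM: "\<forall>a\<in>{1,2,3}. \<forall>b\<in>{1,2,3}. det (M a b) = 1"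
    and i: "i \<in> {1,2,3}" and hyperbolic: "2 < \<bar>trace (M 1 1)\<bar>"
  obtains u :: "nat \<Rightarrow> nat list" and R S :: "real^2^2" and \<rho> \<mu> :: real
  where "\<And>m. set (u m) \<subseteq> {1,2,3}" "\<And>m. excursion M i (u m) = \<rho> ^ m *\<^sub>R R + \<mu> ^ m *\<^sub>R S"
    "det R = 0" "trace R \<noteq> 0" "\<rho> * \<mu> = 1" "1 < \<bar>\<rho>\<bar>"
proof -
  have d1: "det (M 1 1) = 1" "det (M i 1) = 1" "det (M 1 i) = 1"
    using dM i by blast+
  obtain \<rho> \<mu> where rm: "\<rho> + \<mu> = trace (M 1 1)" "\<rho> * \<mu> = 1" "1 < \<bar>\<rho>\<bar>"
    using hyperbolic by (rule SL2_hyperbolic_roots)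
  then have "\<rho> \<noteq> \<mu>"
    using mult_eq_1_imp_abs_less_1[OF rm(2,3)] by auto
  define P where "P = (1 / (\<rho> - \<mu>)) *\<^sub>R (M 1 1 - \<mu> *\<^sub>R mat 1)"
  define Q where "Q = (1 / (\<rho> - \<mu>)) *\<^sub>R (\<rho> *\<^sub>R mat 1 - M 1 1)"
  note spectral = matpow_spectral_decomposition[OF d1(1) rm(1,2) \<open>\<rho> \<noteq> \<mu>\<close>, folded P_def Q_def]
  obtain u :: "nat \<Rightarrow> nat list" and H :: "real^2^2" where u: "\<And>m. set (u m) \<subseteq> {1,2,3}"
    "\<And>m. excursion M i (u m) = M 1 i ** matpow (M 1 1) m ** M i 1 ** H"
    "trace (M 1 i ** P ** M i 1 ** H) \<noteq> 0"
    by (rule excursion_family_through_1[OF d1(2,3) spectral(3) i]) (rule that)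
  show ?thesis
  proof (rule that[OF u(1) _ _ u(3) rm(2,3)])
    show "excursion M i (u m) = \<rho> ^ m *\<^sub>R (M 1 i ** P ** M i 1 ** H) + \<mu> ^ m *\<^sub>R (M 1 i ** Q ** M i 1 ** H)" for m
      unfolding u(2) spectral(1) by (simp add: matrix_linear_simps matrix_mul_assoc)
    show "det (M 1 i ** P ** M i 1 ** H) = 0"
      using spectral(2) by (simp add: det_mul)
  qed
qed

lemma exists_excursion_with_growth:
  fixes M M' :: "nat \<Rightarrow> nat \<Rightarrow> real^2^2"
  assumes dM: "\<forall>a\<in>{1,2,3}. \<forall>b\<in>{1,2,3}. det (M a b) = 1"
    and dM': "\<forall>a\<in>{1,2,3}. \<forall>b\<in>{1,2,3}. det (M' a b) = 1"
    and i: "i \<in> {1,2,3}" and elliptic: "\<bar>trace (M i i)\<bar> \<le> 2" and hyperbolic: "2 < \<bar>trace (M 1 1)\<bar>"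
  obtains u where "set u \<subseteq> {1,2,3}"
    "\<exists>\<^sub>F k in sequentially. 2 < \<bar>trace (excursion M i u ** matpow (M i i) k)\<bar>"
    "\<bar>trace (M' i i)\<bar> \<le> 2 \<or> full_trace_growth (excursion M' i u) (M' i i)"
proof -
  obtain u R S \<rho> \<mu> where u: "\<And>m. set (u m) \<subseteq> {1,2,3}"
    and G: "\<And>m. excursion M i (u m) = \<rho> ^ m *\<^sub>R R + \<mu> ^ m *\<^sub>R S"
    and R: "det R = 0" "trace R \<noteq> 0" and rm: "\<rho> * \<mu> = 1" "1 < \<bar>\<rho>\<bar>"
    by (rule excursions_through_hyperbolic_symbol[OF dM i hyperbolic]) (rule that)
  have dB: "det (M i i) = 1"
    using dM i by blast
  have "\<bar>\<mu>\<bar> < 1"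
    using rm by (rule mult_eq_1_imp_abs_less_1)
  then have \<mu>: "\<bar>\<mu>\<bar> \<le> 1" "\<bar>\<mu> * \<mu>\<bar> \<le> 1"
    using mult_le_one[of "\<bar>\<mu>\<bar>" "\<bar>\<mu>\<bar>"] by (auto simp: abs_mult)
  have "R ** R = trace R *\<^sub>R R" "(\<rho> * \<mu>) ^ m = 1" for m
    using cayley_hamilton_2x2[of R] R(1) rm(1) by simp_all
  then have GG: "excursion M i (u m @ i # u m) =
      (trace R * (\<rho> * \<rho>) ^ m) *\<^sub>R R + ((R ** S + S ** R) + (\<mu> * \<mu>) ^ m *\<^sub>R (S ** S))" for m
    by (simp add: excursion_append G matrix_linear_simps algebra_simps power_mult_distrib)
  have "\<forall>\<^sub>F m in sequentially. \<exists>\<^sub>F k in sequentially. 2 < \<bar>trace (excursion M i (u m) ** matpow (M i i) k)\<bar>"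
    using eventually_frequently_large_trace[OF dB elliptic _ R(2) rm(2) \<mu>(1), of 1 0 S] by (simp add: G)
  moreover have "\<forall>\<^sub>F m in sequentially. \<exists>\<^sub>F k in sequentially.
      2 < \<bar>trace (excursion M i (u m @ i # u m) ** matpow (M i i) k)\<bar>"
    unfolding GG using R(2) rm(2) less_1_mult[of "\<bar>\<rho>\<bar>" "\<bar>\<rho>\<bar>"]
    by (intro eventually_frequently_large_trace[OF dB elliptic _ R(2) _ \<mu>(2)]) (auto simp: abs_mult)
  ultimately obtain m where
    m: "\<exists>\<^sub>F k in sequentially. 2 < \<bar>trace (excursion M i (u m) ** matpow (M i i) k)\<bar>"
      "\<exists>\<^sub>F k in sequentially. 2 < \<bar>trace (excursion M i (u m @ i # u m) ** matpow (M i i) k)\<bar>"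
    using eventually_happens'[OF sequentially_bot] eventually_conj by blast
  have "set (u m @ i # u m) \<subseteq> {1,2,3}"
    using u(1) i by auto
  moreover have "det (excursion M' i (u m)) = 1"
    using dM' u(1) i by (rule det_excursion)
  ultimately show ?thesis
    using full_trace_growth_or_square[of "excursion M' i (u m)" "M' i i"] that[OF u(1) m(1)] that[OF _ m(2)]
    by (force simp: excursion_append)
qed

lemma exists_approximating_word:
  fixes r :: "(int \<Rightarrow> nat) \<Rightarrow> real" and M M' :: "nat \<Rightarrow> nat \<Rightarrow> real^2^2"
  assumes r: "continuous_on Sigma3 r" "\<forall>x\<in>Sigma3. 0 < r x"
    and dM: "\<forall>a\<in>{1,2,3}. \<forall>b\<in>{1,2,3}. det (M a b) = 1"
    and dM': "\<forall>a\<in>{1,2,3}. \<forall>b\<in>{1,2,3}. det (M' a b) = 1"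
    and i: "i \<in> {1,2,3}" and elliptic: "\<bar>trace (M i i)\<bar> \<le> 2" and hyperbolic: "2 < \<bar>trace (M 1 1)\<bar>"
    and "0 < e"
  obtains w where "w \<noteq> []" "set w \<subseteq> {1,2,3}" "\<bar>lyap r M w - lyap r M [i]\<bar> < e"
    "\<bar>lyap r M' w - lyap r M' [i]\<bar> < e" "0 < lyap r M w"
proof -
  obtain u where u: "set u \<subseteq> {1,2,3}"
    "\<exists>\<^sub>F k in sequentially. 2 < \<bar>trace (excursion M i u ** matpow (M i i) k)\<bar>"
    "\<bar>trace (M' i i)\<bar> \<le> 2 \<or> full_trace_growth (excursion M' i u) (M' i i)"
    using exists_excursion_with_growth[OF dM dM' i elliptic hyperbolic] by blast
  have "\<forall>\<^sub>F n in sequentially. \<bar>lyap r M (replicate (Suc n) i @ u) - lyap r M [i]\<bar> < e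
      \<and> \<bar>lyap r M' (replicate (Suc n) i @ u) - lyap r M' [i]\<bar> < e"
    using lyap_replicate_tendsto[OF r dM u(1) i] lyap_replicate_tendsto[OF r dM' u(1) i u(3)]
      elliptic \<open>0 < e\<close>
    by (auto simp: tendsto_iff dist_real_def intro: eventually_conj)
  then obtain n where "\<bar>lyap r M (replicate (Suc n) i @ u) - lyap r M [i]\<bar> < e"
    "\<bar>lyap r M' (replicate (Suc n) i @ u) - lyap r M' [i]\<bar> < e"
    "2 < \<bar>trace (excursion M i u ** matpow (M i i) n)\<bar>"
    using frequently_eventually_conj[OF u(2)] frequently_ex by blast
  moreover from this(3) have "0 < lyap r M (replicate (Suc n) i @ u)"
    using r(2) dM u(1) i by (intro lyap_replicate_pos)
  ultimately show ?thesis
    using u(1) i by (intro that[of "replicate (Suc n) i @ u"]) auto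
qed

theorem proposition2p4:
  fixes r :: "(int \<Rightarrow> nat) \<Rightarrow> real" and M M' :: "nat \<Rightarrow> nat \<Rightarrow> real^2^2"
  assumes "continuous_on Sigma3 r"
    and "\<forall>x\<in>Sigma3. r x > 0"
    and "\<forall>i\<in>{1,2,3}. \<forall>j\<in>{1,2,3}. det (M i j) = 1"
    and "\<forall>i\<in>{1,2,3}. \<forall>j\<in>{1,2,3}. det (M' i j) = 1"
    and "lyap r M [1] \<noteq> 0"
  shows "\<forall>i\<in>{1,2,3}. \<forall>e>0. \<exists>w. w \<noteq> [] \<and> set w \<subseteq> {1,2,3}
           \<and> \<bar>lyap r M w - lyap r M [i]\<bar> < e
           \<and> \<bar>lyap r M' w - lyap r M' [i]\<bar> < e
           \<and> lyap r M w \<noteq> 0"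
proof (intro ballI allI impI)
  fix i :: nat and e :: real assume i: "i \<in> {1,2,3}" and "0 < e"
  show "\<exists>w. w \<noteq> [] \<and> set w \<subseteq> {1,2,3} \<and> \<bar>lyap r M w - lyap r M [i]\<bar> < e
      \<and> \<bar>lyap r M' w - lyap r M' [i]\<bar> < e \<and> lyap r M w \<noteq> 0"
  proof (cases "lyap r M [i] = 0")
    case True
    then have "\<bar>trace (M i i)\<bar> \<le> 2" "2 < \<bar>trace (M 1 1)\<bar>"
      using assms(2,3,5) i lyap_single_eq_0_iff[of r M] by (auto simp: not_le)
    then obtain w where "w \<noteq> []" "set w \<subseteq> {1,2,3}" "\<bar>lyap r M w - lyap r M [i]\<bar> < e"
      "\<bar>lyap r M' w - lyap r M' [i]\<bar> < e" "0 < lyap r M w"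
      using exists_approximating_word[OF assms(1-4) i _ _ \<open>0 < e\<close>] by blast
    then show ?thesis
      by fastforce
  qed (use i \<open>0 < e\<close> in \<open>intro exI[of _ "[i]"], auto\<close>)
qed

end
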